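(* Let $n\in\mathbb{N}$ and let $(X_1,\dots,X_n)$ be a random vector with joint distribution function $F_{(X_1,\dots,X_n)}$ and marginal distribution functions $F_i=F_{X_i}$, $i=1,\dots,n$. Let $C_F$ be a copula such that $F_{(X_1,\dots,X_n)}(x_1,\dots,x_n)=C_F(F_1(x_1),\dots,F_n(x_n))$ for all $(x_1,\dots,x_n)\in\mathbb{R}^n$. Let $(\alpha_1,\dots,\alpha_n)\in(0,1)^n$ satisfy $F_i^{\wedge}(\alpha_i)<F_i^{\vee}(\alpha_i)$ for all $i\in\{1,\dots,n\}$. Then \[C_F(\alpha_1,\dots,\alpha_n)=F_{(X_1,\dots,X_n)}\big(F_1^{\wedge}(\alpha_1),\dots,F_n^{\wedge}(\alpha_n)\big).\]
   Context: A copula is an $n$-variate distribution function on $[0,1]^n$ with uniform $U(0,1)$ marginals. For a univariate distribution function $G$ and $\alpha\in(0,1)$: $G^{\wedge}(\alpha)=\inf\{x:G(x)\ge\alpha\}$ (left $\alpha$-quantile) and $G^{\vee}(\alpha)=\inf\{x:G(x)>\alpha\}$ (right $\alpha$-quantile). *)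

theory Defs
  imports "HOL-Probability.Probability"
begin

definition left_quantile :: "(real \<Rightarrow> real) \<Rightarrow> real \<Rightarrow> real" where
  "left_quantile G \<alpha> = Inf {x. G x \<ge> \<alpha>}"

definition right_quantile :: "(real \<Rightarrow> real) \<Rightarrow> real \<Rightarrow> real" where
  "right_quantile G \<alpha> = Inf {x. G x > \<alpha>}"

definition joint_cdf :: "'a measure \<Rightarrow> ('n \<Rightarrow> 'a \<Rightarrow> real) \<Rightarrow> ('n \<Rightarrow> real) \<Rightarrow> real" where
  "joint_cdf M X x = measure M {\<omega> \<in> space M. \<forall>i. X i \<omega> \<le> x i}"

definition marg_cdf :: "'a measure \<Rightarrow> ('n \<Rightarrow> 'a \<Rightarrow> real) \<Rightarrow> 'n \<Rightarrow> real \<Rightarrow> real" where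
  "marg_cdf M X i t = measure M {\<omega> \<in> space M. X i \<omega> \<le> t}"

definition is_copula :: "(('n::finite \<Rightarrow> real) \<Rightarrow> real) \<Rightarrow> bool" where
  "is_copula C \<longleftrightarrow> (\<exists>\<mu>. prob_space \<mu> \<and> sets \<mu> = sets (PiM UNIV (\<lambda>_. borel)) \<and>
      (\<forall>i t. 0 \<le> t \<and> t \<le> 1 \<longrightarrow> measure \<mu> {u \<in> space \<mu>. u i \<le> t} = t) \<and>
      (\<forall>u. (\<forall>i. 0 \<le> u i \<and> u i \<le> 1) \<longrightarrow>
            C u = measure \<mu> {v \<in> space \<mu>. \<forall>i. v i \<le> u i}))"

end

theory Submission
  imports Defs
begin

text \<open>For a distribution function \<open>F\<close>, right continuity gives \<open>\<alpha> \<le> F (F\<^sup>\<and>(\<alpha>))\<close>, and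
  \<open>F (F\<^sup>\<and>(\<alpha>)) > \<alpha>\<close> would force \<open>F\<^sup>\<or>(\<alpha>) \<le> F\<^sup>\<and>(\<alpha>)\<close>; so under \<open>F\<^sup>\<and>(\<alpha>) < F\<^sup>\<or>(\<alpha>)\<close>
  each marginal attains exactly \<open>\<alpha>\<^sub>i\<close> at its left quantile, and the Sklar representation
  \<open>F\<^sub>X(x) = C(F\<^sub>1(x\<^sub>1), \<dots>, F\<^sub>n(x\<^sub>n))\<close> evaluated at the left quantiles yields the claim.
  No property of \<open>C\<close> as a copula is needed.\<close>

lemma bdd_below_superlevel_set:
  fixes F :: "real \<Rightarrow> real"
  assumes "(F \<longlongrightarrow> 0) at_bot" and "0 < a"
  shows "bdd_below {x. a \<le> F x}"
proof -
  have "eventually (\<lambda>x. F x < a) at_bot"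
    using assms by (simp add: order_tendstoD(2))
  then obtain b where b: "\<And>x. x \<le> b \<Longrightarrow> F x < a"
    by (auto simp: eventually_at_bot_linorder)
  show ?thesis
  proof (rule bdd_belowI)
    fix x assume "x \<in> {x. a \<le> F x}"
    then show "b \<le> x"
      using b[of x] by (cases "x \<le> b") auto
  qed
qed

lemma superlevel_set_nonempty:
  fixes F :: "real \<Rightarrow> real"
  assumes "(F \<longlongrightarrow> 1) at_top" and "a < 1"
  shows "{x. a \<le> F x} \<noteq> {}"
proof -
  have "eventually (\<lambda>x. a < F x) at_top"
    using assms by (simp add: order_tendstoD(1))
  then obtain c where "\<And>x. c \<le> x \<Longrightarrow> a < F x"
    by (auto simp: eventually_at_top_linorder)
  then show ?thesis
    by (metis empty_iff less_imp_le mem_Collect_eq order_refl)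
qed

lemma le_at_left_quantile:
  fixes F :: "real \<Rightarrow> real"
  assumes mono: "mono F" and right_cont: "continuous (at_right (left_quantile F a)) F"
    and ne: "{x. a \<le> F x} \<noteq> {}" and bdd: "bdd_below {x. a \<le> F x}"
  shows "a \<le> F (left_quantile F a)"
proof -
  define q where "q = left_quantile F a"
  have "a \<le> F x" if "q < x" for x
  proof -
    obtain s where "a \<le> F s" "s < x"
      using cInf_lessD[OF ne, of x] \<open>q < x\<close> unfolding q_def left_quantile_def by auto
    then show ?thesis
      using monoD[OF mono, of s x] by simp
  qed
  then have "eventually (\<lambda>x. a \<le> F x) (at_right q)"
    by (auto simp: eventually_at_right_field intro: gt_ex)
  moreover have "(F \<longlongrightarrow> F q) (at_right q)"
    using right_cont unfolding q_def by (simp add: continuous_within)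
  ultimately show ?thesis
    unfolding q_def by (intro tendsto_lowerbound) auto
qed

lemma left_quantile_value_le:
  fixes F :: "real \<Rightarrow> real"
  assumes bdd: "bdd_below {x. a \<le> F x}"
    and gap: "left_quantile F a < right_quantile F a"
  shows "F (left_quantile F a) \<le> a"
proof (rule ccontr)
  assume "\<not> F (left_quantile F a) \<le> a"
  then have "right_quantile F a \<le> left_quantile F a"
    unfolding right_quantile_def
    by (intro cInf_lower) (auto intro: bdd_below_mono[OF bdd])
  with gap show False by simp
qed

lemma (in real_distribution) cdf_left_quantile:
  assumes "0 < a" "a < 1"
    and "left_quantile (cdf M) a < right_quantile (cdf M) a"
  shows "cdf M (left_quantile (cdf M) a) = a"
proof -
  have bdd: "bdd_below {x. a \<le> cdf M x}"
    using bdd_below_superlevel_set[OF cdf_lim_at_bot \<open>0 < a\<close>] .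
  have "a \<le> cdf M (left_quantile (cdf M) a)"
    by (rule le_at_left_quantile[OF _ cdf_is_right_cont _ bdd])
       (use cdf_nondecreasing superlevel_set_nonempty[OF cdf_lim_at_top_prob \<open>a < 1\<close>]
         in \<open>auto intro: monoI\<close>)
  with left_quantile_value_le[OF bdd assms(3)] show ?thesis
    by simp
qed

lemma marg_cdf_eq_cdf_distr:
  assumes "X i \<in> borel_measurable M"
  shows "marg_cdf M X i = cdf (distr M borel (X i))"
proof
  fix t
  have "X i -` {..t} \<inter> space M = {\<omega> \<in> space M. X i \<omega> \<le> t}"
    by auto
  then show "marg_cdf M X i t = cdf (distr M borel (X i)) t"
    unfolding marg_cdf_def cdf_def using assms by (subst measure_distr) auto
qed

theorem mainTheorem10:
  fixes M :: "'a measure" and X :: "'n::finite \<Rightarrow> 'a \<Rightarrow> real"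
    and C :: "('n \<Rightarrow> real) \<Rightarrow> real" and \<alpha> :: "'n \<Rightarrow> real"
  assumes "prob_space M"
    and "\<forall>i. X i \<in> borel_measurable M"
    and "is_copula C"
    and "\<forall>x. joint_cdf M X x = C (\<lambda>i. marg_cdf M X i (x i))"
    and "\<forall>i. 0 < \<alpha> i \<and> \<alpha> i < 1"
    and "\<forall>i. left_quantile (marg_cdf M X i) (\<alpha> i) < right_quantile (marg_cdf M X i) (\<alpha> i)"
  shows "C \<alpha> = joint_cdf M X (\<lambda>i. left_quantile (marg_cdf M X i) (\<alpha> i))"
proof -
  have marginal_at_quantile: "marg_cdf M X i (left_quantile (marg_cdf M X i) (\<alpha> i)) = \<alpha> i" for i
  proof -
    interpret real_distribution "distr M borel (X i)"
      using assms(1,2) by (simp add: prob_space.real_distribution_distr)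
    show ?thesis
      using cdf_left_quantile assms(5,6) marg_cdf_eq_cdf_distr assms(2) by metis
  qed
  show ?thesis
    using assms(4) marginal_at_quantile by simp
qed

end
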